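(* Let $z \in G_D(\mathbb{Q})$ and suppose $z = \pm\zeta_{p_1}^{\pm \alpha_1} \cdots \zeta_{p_k}^{\pm \alpha_k}$, where $p_1,\dots,p_k$ are distinct odd primes with $\left(\frac{-D}{p_i}\right) = 1$ for all $i$ and $\alpha_i \ge 1$. If $z$ corresponds to the normalized triple $(a, b, c)$, i.e. $z = \frac{\pm a \pm b\sqrt{-D}}{c}$ with $a^2+Db^2=c^2$, $a,b,c\in\mathbb{N}$ and $\gcd(a,b,c)=1$, then $c = p_1^{\alpha_1} \cdots p_k^{\alpha_k}$.
   Context: Let $D>1$ be a square-free integer with $-D \equiv 2$ or $3 \pmod 4$, and assume the class group $C(-4D)$ of primitive positive-definite binary quadratic forms of discriminant $-4D$ is a free $\mathbb{Z}_2$-module, i.e. $C(-4D)\cong(\mathbb{Z}/2\mathbb{Z})^n$ for some $n\ge 0$. Let $G_D(\mathbb{Q}) := \{a + b\sqrt{-D} \in \mathbb{Q}[\sqrt{-D}] : a^2 + Db^2 = 1\}$, a group under multiplication. A solution $(a,b,c)$ with $a,b,c\in\mathbb{N}$ of $x^2+Dy^2=z^2$ is normalized if $\gcd(a,b,c)=1$. For each odd prime $q$ with Legendre symbol $\left(\frac{-D}{q}\right) = 1$, there exist unique positive integers $x_0, y_0$ with $\gcd(x_0,y_0)=1$ and $q^2 = x_0^2 + D y_0^2$; define $\zeta_q := \frac{x_0 + y_0\sqrt{-D}}{q} \in G_D(\mathbb{Q})$. *)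

theory Defs
  imports Complex_Main "HOL-Number_Theory.Number_Theory" "HOL-Computational_Algebra.Squarefree"
begin

definition form_eval :: "int \<times> int \<times> int \<Rightarrow> int \<Rightarrow> int \<Rightarrow> int" where
  "form_eval f x y = (case f of (a, b, c) \<Rightarrow> a * x^2 + b * x * y + c * y^2)"

definition form_disc :: "int \<times> int \<times> int \<Rightarrow> int" where
  "form_disc f = (case f of (a, b, c) \<Rightarrow> b^2 - 4 * a * c)"

definition prim_pos_def_form :: "int \<Rightarrow> int \<times> int \<times> int \<Rightarrow> bool" where
  "prim_pos_def_form d f = (case f of (a, b, c) \<Rightarrow>
      form_disc f = d \<and> d < 0 \<and> a > 0 \<and> gcd (gcd a b) c = 1)"

definition form_equiv :: "int \<times> int \<times> int \<Rightarrow> int \<times> int \<times> int \<Rightarrow> bool" where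
  "form_equiv f g = (\<exists>p q r s. p * s - q * r = 1 \<and>
      (\<forall>x y. form_eval g x y = form_eval f (p * x + q * y) (r * x + s * y)))"

text \<open>The inverse of the class of (a,b,c) in the form class group C(d) is the class of (a,-b,c).
  The class group C(d) is an elementary abelian 2-group (i.e. a free Z/2-module, isomorphic to
  (Z/2)^n) iff every class equals its own inverse.\<close>
definition class_group_elem_2 :: "int \<Rightarrow> bool" where
  "class_group_elem_2 d = (\<forall>a b c. prim_pos_def_form d (a, b, c) \<longrightarrow> form_equiv (a, b, c) (a, -b, c))"

definition sqrtmD :: "int \<Rightarrow> complex" where
  "sqrtmD D = \<i> * complex_of_real (sqrt (real_of_int D))"

definition G_D :: "int \<Rightarrow> complex set" where
  "G_D D = {of_rat a + of_rat b * sqrtmD D | a b :: rat. a^2 + of_int D * b^2 = 1}"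

definition zeta :: "int \<Rightarrow> nat \<Rightarrow> complex" where
  "zeta D q = (let (x0, y0) = (THE (x, y). x > 0 \<and> y > 0 \<and> coprime x y \<and>
                         (int q)^2 = x^2 + D * y^2)
               in (of_int x0 + of_int y0 * sqrtmD D) / of_nat q)"

end

theory Submission
  imports Defs
begin

(* Write zeta_p = pi_p / p with pi_p = x + y sqrt(-D) and x^2 + D y^2 = p^2. Such a representation
   exists because the form (p, 2b, c) with b^2 + D = p c is equivalent to its inverse (p, -2b, c),
   and it is unique. As zeta_p^-1 = conj(pi_p) / p, we get z = +-gamma / C with C the product of the
   p_i^alpha_i and gamma = u + v sqrt(-D) a product of powers pi_(p_i)^alpha_i or their conjugates.
   Then gcd(u, v) = 1: the ring map Z[sqrt(-D)] -> Z/p sending sqrt(-D) to a root t of t^2 = -D with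
   x + y t = 2x (mod p) does not kill pi_p, so powers of pi_p stay primitive, and products of
   primitive elements of coprime norms are primitive. Since (+-a +- b sqrt(-D)) / c and +-gamma / C
   are then both in lowest terms, c = C. *)

definition quad_int :: "int \<Rightarrow> int \<Rightarrow> int \<Rightarrow> complex" where
  "quad_int D u v = of_int u + of_int v * sqrtmD D"

definition primitive_of_norm :: "int \<Rightarrow> int \<Rightarrow> complex \<Rightarrow> bool" where
  "primitive_of_norm D N w \<longleftrightarrow> (\<exists>u v. w = quad_int D u v \<and> coprime u v \<and> u^2 + D * v^2 = N)"

lemma coprimeI_primes_int:
  fixes a b :: int
  assumes "\<And>r. prime r \<Longrightarrow> r dvd a \<Longrightarrow> r dvd b \<Longrightarrow> False"
  shows "coprime a b"
proof (rule ccontr)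
  assume "\<not> coprime a b"
  then have "\<bar>gcd a b\<bar> \<noteq> 1" by (simp add: coprime_iff_gcd_eq_1)
  then obtain r where "prime r" "r dvd gcd a b" by (rule prime_factor_int)
  then show False using assms by auto
qed

lemma odd_prime_not_dvd_two:
  fixes q :: int
  assumes "prime q" "odd q"
  shows "\<not> q dvd 2"
  using assms primes_dvd_imp_eq[of q 2] by auto

lemma Legendre_eq_1D:
  assumes "Legendre a p = 1"
  shows "\<not> p dvd a \<and> QuadRes p a"
  using assms by (auto simp: Legendre_def cong_0_iff split: if_splits)

lemma Re_quad_int [simp]: "Re (quad_int D u v) = of_int u"
  by (simp add: quad_int_def sqrtmD_def)

lemma Im_quad_int [simp]: "Im (quad_int D u v) = of_int v * sqrt (of_int D)"
  by (simp add: quad_int_def sqrtmD_def)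

lemma quad_int_eq_iff:
  assumes "D \<noteq> 0"
  shows "quad_int D u v = quad_int D u' v' \<longleftrightarrow> u = u' \<and> v = v'"
  using assms by (auto simp: complex_eq_iff)

lemma of_int_mult_quad_int: "of_int s * quad_int D u v = quad_int D (s * u) (s * v)"
  by (simp add: quad_int_def algebra_simps)

lemma quad_int_mult:
  assumes "D \<ge> 0"
  shows "quad_int D u v * quad_int D u' v' = quad_int D (u * u' - D * v * v') (u * v' + v * u')"
proof -
  have "complex_of_real (sqrt (of_int D)) * complex_of_real (sqrt (of_int D)) = of_int D"
    using assms by (simp flip: of_real_mult)
  then have "sqrtmD D * sqrtmD D = - of_int D"
    by (simp add: sqrtmD_def algebra_simps)
  then show ?thesis
    by (simp add: quad_int_def algebra_simps) (simp add: mult.assoc[symmetric])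
qed

lemma quad_norm_mult:
  fixes D u v u' v' :: int
  shows "(u * u' - D * v * v')^2 + D * (u * v' + v * u')^2 = (u^2 + D * v^2) * (u'^2 + D * v'^2)"
  by (simp add: power2_eq_square algebra_simps)

lemma quad_eval_mult_cong:
  fixes D q t u v u' v' :: int
  assumes "q dvd t^2 + D"
  shows "[(u * u' - D * v * v') + (u * v' + v * u') * t = (u + v * t) * (u' + v' * t)] (mod q)"
proof -
  have "(u + v * t) * (u' + v' * t) - ((u * u' - D * v * v') + (u * v' + v * u') * t)
      = v * v' * (t^2 + D)"
    by (simp add: power2_eq_square algebra_simps)
  then show ?thesis
    using assms by (metis cong_iff_dvd_diff cong_sym dvd_mult)
qed

lemma prime_not_dvd_coprime_rep:
  fixes D q x y :: int
  assumes "prime q" "\<not> q dvd D" "coprime x y" "q dvd x^2 + D * y^2"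
  shows "\<not> q dvd x \<and> \<not> q dvd y"
proof -
  have "q dvd x \<longleftrightarrow> q dvd x^2"
    using assms(1) by (simp add: prime_dvd_power_iff)
  also have "\<dots> \<longleftrightarrow> q dvd D * y^2"
    using assms(4) by (metis dvd_add_right_iff dvd_add_left_iff)
  also have "\<dots> \<longleftrightarrow> q dvd y"
    using assms(1,2) by (simp add: prime_dvd_mult_iff prime_dvd_power_iff)
  finally have "q dvd x \<longleftrightarrow> q dvd y" .
  moreover have "\<not> (q dvd x \<and> q dvd y)"
    using assms(1,3) coprime_common_divisor not_prime_unit by blast
  ultimately show ?thesis by blast
qed

lemma primitive_of_norm_mult:
  assumes "D \<ge> 0" "primitive_of_norm D N w" "primitive_of_norm D N' w'" "coprime N N'"
  shows "primitive_of_norm D (N * N') (w * w')"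
proof -
  obtain u v where w: "w = quad_int D u v" "coprime u v" "u^2 + D * v^2 = N"
    using assms(2) by (auto simp: primitive_of_norm_def)
  obtain u' v' where w': "w' = quad_int D u' v'" "coprime u' v'" "u'^2 + D * v'^2 = N'"
    using assms(3) by (auto simp: primitive_of_norm_def)
  define U V where "U = u * u' - D * v * v'" and "V = u * v' + v * u'"
  have "coprime U V"
  proof (rule coprimeI_primes_int)
    fix r :: int
    assume r: "prime r" "r dvd U" "r dvd V"
    \<comment> \<open>Multiplying \<open>w w'\<close> by the conjugate of \<open>w'\<close> (of \<open>w\<close>) gives \<open>N' w\<close> (\<open>N w'\<close>), so \<open>r\<close>
      would divide both coordinates of \<open>w\<close> or of \<open>w'\<close>, as it cannot divide both \<open>N\<close> and \<open>N'\<close>.\<close>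
    have "u * N' = U * u' + D * V * v'" "v * N' = V * u' - U * v'"
      "u' * N = U * u + D * V * v" "v' * N = V * u - U * v"
      unfolding U_def V_def w(3)[symmetric] w'(3)[symmetric]
      by (simp_all add: power2_eq_square algebra_simps)
    then have "r dvd u * N'" "r dvd v * N'" "r dvd u' * N" "r dvd v' * N"
      using r(2,3) by (simp_all add: dvd_add dvd_diff dvd_mult dvd_mult2)
    moreover have "r dvd N * N'"
      using r(2,3) quad_norm_mult[of u u' D v v'] unfolding U_def V_def w(3) w'(3)
      by (metis dvd_add dvd_mult power2_eq_square)
    ultimately show False
      using r(1) assms(4) w(2) w'(2) coprime_common_divisor not_prime_unit
      by (metis prime_dvd_mult_iff)
  qed
  moreover have "w * w' = quad_int D U V"
    unfolding w w' U_def V_def using assms(1) by (rule quad_int_mult)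
  moreover have "U^2 + D * V^2 = N * N'"
    unfolding U_def V_def w(3)[symmetric] w'(3)[symmetric] by (rule quad_norm_mult)
  ultimately show ?thesis
    unfolding primitive_of_norm_def by blast
qed

lemma primitive_of_norm_power:
  fixes D q x y :: int
  assumes "D > 0" "prime q" "odd q" "\<not> q dvd D" "coprime x y" "x^2 + D * y^2 = q^2"
  shows "primitive_of_norm D (q^(2 * n)) (quad_int D x y ^ n)"
proof -
  have "\<not> q dvd x" "\<not> q dvd y"
    using prime_not_dvd_coprime_rep[OF assms(2,4,5)] assms(6) by auto
  then have "coprime y q"
    using assms(2) prime_imp_coprime coprime_commute by blast
  then obtain y' where "[y * y' = 1] (mod q)"
    using cong_solve_coprime_int by blast
  define t where "t = x * y'"
  have yt: "[y * t = x] (mod q)"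
    using cong_scalar_left[OF \<open>[y * y' = 1] (mod q)\<close>, of x] by (simp add: t_def ac_simps)
  have "[y^2 * t^2 = x^2] (mod q)"
    using cong_pow[OF yt, of 2] by (simp add: power_mult_distrib)
  then have "[y^2 * t^2 + D * y^2 = x^2 + D * y^2] (mod q)"
    by (rule cong_add) simp
  then have "[y^2 * (t^2 + D) = x^2 + D * y^2] (mod q)"
    by (simp add: algebra_simps)
  then have "q dvd y^2 * (t^2 + D)"
    using assms(6) by (simp add: cong_dvd_iff)
  then have t_root: "q dvd t^2 + D"
    using assms(2) \<open>\<not> q dvd y\<close> by (simp add: prime_dvd_mult_iff prime_dvd_power_iff)
  have "[x + y * t = 2 * x] (mod q)"
    using yt by (metis cong_add_lcancel mult_2)
  \<comment> \<open>\<open>u + v \<surd>-D \<mapsto> u + v t\<close> is multiplicative modulo \<open>q\<close> and sends \<open>x + y \<surd>-D\<close> to the unit \<open>2 x\<close>.\<close>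
  have "\<exists>A B. quad_int D x y ^ n = quad_int D A B \<and> A^2 + D * B^2 = q^(2 * n)
      \<and> [A + B * t = (2 * x)^n] (mod q)"
  proof (induction n)
    case 0
    show ?case
      by (intro exI[of _ 1] exI[of _ 0]) (simp add: quad_int_def)
  next
    case (Suc n)
    then obtain A B where AB: "quad_int D x y ^ n = quad_int D A B" "A^2 + D * B^2 = q^(2 * n)"
      "[A + B * t = (2 * x)^n] (mod q)" by blast
    have "quad_int D x y ^ Suc n = quad_int D (A * x - D * B * y) (A * y + B * x)"
      using assms(1) by (simp add: AB(1) quad_int_mult ac_simps)
    moreover have "(A * x - D * B * y)^2 + D * (A * y + B * x)^2 = q^(2 * Suc n)"
      using quad_norm_mult[of A x D B y] AB(2) assms(6) by (simp add: power_add power2_eq_square)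
    moreover have "[(A * x - D * B * y) + (A * y + B * x) * t = (2 * x)^Suc n] (mod q)"
      using quad_eval_mult_cong[OF t_root, of A x B y] cong_mult[OF AB(3) \<open>[x + y * t = 2 * x] (mod q)\<close>]
      by (simp add: cong_trans mult.commute)
    ultimately show ?case by blast
  qed
  then obtain A B where AB: "quad_int D x y ^ n = quad_int D A B" "A^2 + D * B^2 = q^(2 * n)"
    "[A + B * t = (2 * x)^n] (mod q)" by blast
  have "coprime A B"
  proof (rule coprimeI_primes_int)
    fix r :: int
    assume r: "prime r" "r dvd A" "r dvd B"
    then have "r dvd q^(2 * n)"
      unfolding AB(2)[symmetric] by (simp add: power2_eq_square)
    then have "r = q"
      using r(1) assms(2) by (metis prime_dvd_power primes_dvd_imp_eq)
    then have "q dvd (2 * x)^n"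
      using r(2,3) AB(3) by (simp add: cong_dvd_iff[symmetric])
    then have "q dvd 2 * x"
      using assms(2) prime_dvd_power by blast
    then show False
      using assms(2,3) odd_prime_not_dvd_two \<open>\<not> q dvd x\<close> by (simp add: prime_dvd_mult_iff)
  qed
  then show ?thesis
    using AB unfolding primitive_of_norm_def by blast
qed

lemma primitive_of_norm_prod:
  fixes N :: "nat \<Rightarrow> int" and w :: "nat \<Rightarrow> complex"
  assumes "D \<ge> 0" "\<forall>i<k. primitive_of_norm D (N i) (w i)"
    and "\<forall>i<k. \<forall>j<k. i \<noteq> j \<longrightarrow> coprime (N i) (N j)"
  shows "primitive_of_norm D (\<Prod>i<k. N i) (\<Prod>i<k. w i)"
  using assms(2,3)
proof (induction k)
  case 0
  show ?case
    unfolding primitive_of_norm_def by (intro exI[of _ 1] exI[of _ 0]) (simp add: quad_int_def)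
next
  case (Suc k)
  have "coprime (\<Prod>i<k. N i) (N k)"
    using Suc.prems(2) by (auto intro: prod_coprime_left)
  with Suc show ?case
    by (simp add: primitive_of_norm_mult[OF assms(1)])
qed

lemma abs_less_of_sum_squares:
  fixes D N U V :: int
  assumes "D > 1" "N > 0" "U^2 + D * V^2 = N^2"
  shows "\<bar>V\<bar> < N"
proof (cases "V = 0")
  case False
  then have "\<bar>V\<bar>^2 < D * V^2"
    using assms(1) by simp
  also have "\<dots> \<le> N^2"
    using assms(3) by (metis le_add_same_cancel2 zero_le_power2)
  finally show ?thesis
    using assms(2) power2_less_imp_less by fastforce
qed (use assms(2) in simp)

lemma prime_sq_rep_unique:
  fixes D q x y x' y' :: int
  assumes "D > 1" "prime q" "odd q" "\<not> q dvd D"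
    and "x > 0" "y > 0" "x' > 0" "y' > 0" "coprime x y" "coprime x' y'"
    and rep: "x^2 + D * y^2 = q^2" and rep': "x'^2 + D * y'^2 = q^2"
  shows "x = x' \<and> y = y'"
proof -
  have q: "\<not> q dvd x" "\<not> q dvd y'" "q > 0"
    using prime_not_dvd_coprime_rep[OF assms(2,4,9)] prime_not_dvd_coprime_rep[OF assms(2,4,10)]
      rep rep' assms(2) prime_gt_0_int by auto
  \<comment> \<open>With \<open>\<pi> = x + y \<surd>-D\<close> and \<open>\<pi>' = x' + y' \<surd>-D\<close>, \<open>B\<close> and \<open>-A\<close> are the \<open>\<surd>-D\<close>-coordinates
    of \<open>\<pi> \<pi>'\<close> and of \<open>\<pi>\<close> times the conjugate of \<open>\<pi>'\<close>; both products have norm \<open>q^4\<close>.\<close>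
  define A B where "A = x * y' - x' * y" and "B = x * y' + x' * y"
  have "A * B = q^2 * (y'^2 - y^2)"
  proof -
    have "A * B = x^2 * y'^2 - x'^2 * y^2"
      unfolding A_def B_def by (simp add: power2_eq_square algebra_simps)
    also have "\<dots> = (q^2 - D * y^2) * y'^2 - (q^2 - D * y'^2) * y^2"
      using rep rep' by (simp flip: rep rep')
    also have "\<dots> = q^2 * (y'^2 - y^2)"
      by (simp add: algebra_simps)
    finally show ?thesis .
  qed
  then have "q^2 dvd A * B" by simp
  moreover have "\<not> (q dvd A \<and> q dvd B)"
  proof
    assume "q dvd A \<and> q dvd B"
    then have "q dvd 2 * (x * y')"
      using dvd_add[of q A B] by (simp add: A_def B_def)
    then show False
      using assms(2,3) q odd_prime_not_dvd_two by (simp add: prime_dvd_mult_iff)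
  qed
  ultimately have "q^2 dvd A \<or> q^2 dvd B"
    using assms(2) prime_imp_power_coprime coprime_dvd_mult_left_iff coprime_dvd_mult_right_iff
    by (metis coprime_commute)
  moreover have "\<bar>A\<bar> < q^2"
  proof -
    have "(x * x' - D * y * (-y'))^2 + D * (x * (-y') + y * x')^2 = q^2 * q^2"
      using quad_norm_mult[of x x' D y "-y'"] by (simp add: rep rep')
    then have "(x * x' + D * y * y')^2 + D * A^2 = (q^2)^2"
      unfolding A_def by (simp add: power2_eq_square algebra_simps)
    then show ?thesis
      using abs_less_of_sum_squares assms(1) q(3) by simp
  qed
  moreover have "\<bar>B\<bar> < q^2"
  proof -
    have "(x * x' - D * y * y')^2 + D * (x * y' + y * x')^2 = q^2 * q^2"
      using quad_norm_mult[of x x' D y y'] by (simp add: rep rep')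
    then have "(x * x' - D * y * y')^2 + D * B^2 = (q^2)^2"
      unfolding B_def by (simp add: power2_eq_square algebra_simps)
    then show ?thesis
      using abs_less_of_sum_squares assms(1) q(3) by simp
  qed
  moreover have "\<not> q^2 dvd B"
  proof
    assume "q^2 dvd B"
    moreover have "B > 0"
      unfolding B_def using assms(5-8) by (simp add: add_pos_pos)
    ultimately have "q^2 \<le> B"
      by (rule zdvd_imp_le)
    then show False
      using \<open>\<bar>B\<bar> < q^2\<close> by simp
  qed
  ultimately have "q^2 dvd A"
    by blast
  then have "A = 0"
    using \<open>\<bar>A\<bar> < q^2\<close> dvd_imp_le_int[of A "q^2"] by (cases "A = 0") simp_all
  then have "x * y' = x' * y"
    unfolding A_def by simp
  then have "x dvd x'" "x' dvd x"
    using assms(9,10) by (metis coprime_dvd_mult_left_iff dvd_triv_left)+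
  then have "x = x'"
    using assms(5,7) by (simp add: zdvd_antisym_nonneg)
  then show ?thesis
    using \<open>x * y' = x' * y\<close> assms(5) by simp
qed

lemma ambiguous_form_represents_sq:
  fixes D q b c :: int
  assumes bc: "b^2 + D = q * c" and "\<not> q dvd 2 * b"
    and "form_equiv (q, 2 * b, c) (q, -(2 * b), c)"
  shows "\<exists>u v. v \<noteq> 0 \<and> u^2 + D * v^2 = q^2"
proof -
  obtain P Q R S where det: "P * S - Q * R = 1"
    and H: "\<And>x y. form_eval (q, -(2 * b), c) x y = form_eval (q, 2 * b, c) (P * x + Q * y) (R * x + S * y)"
    using assms(3) unfolding form_equiv_def by blast
  have q_val: "q = q * P^2 + 2 * b * P * R + c * R^2"
    using H[of 1 0] by (simp add: form_eval_def)
  have cross: "-2 * b = 2 * q * P * Q + 2 * b * (P * S + Q * R) + 2 * c * R * S"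
    using H[of 1 1] H[of 1 0] H[of 0 1]
    by (simp add: form_eval_def power2_eq_square algebra_simps)
  have "R \<noteq> 0"
  proof
    assume "R = 0"
    then have "2 * b = q * (- (P * Q))"
      using det cross by (simp add: algebra_simps)
    then show False
      using assms(2) by (metis dvdI)
  qed
  \<comment> \<open>\<open>q f(x, y) = (q x + b y)^2 + D y^2\<close> for \<open>f = (q, 2 b, c)\<close>, and \<open>f(P, R) = q\<close>.\<close>
  have "(q * P + b * R)^2 + D * R^2 = q * (q * P^2 + 2 * b * P * R) + (b^2 + D) * R^2"
    by (simp add: power2_eq_square algebra_simps)
  also have "\<dots> = q * (q * P^2 + 2 * b * P * R + c * R^2)"
    unfolding bc by (simp add: algebra_simps)
  also have "\<dots> = q^2"
    by (simp flip: q_val add: power2_eq_square[of q])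
  finally have "(q * P + b * R)^2 + D * R^2 = q^2" .
  with \<open>R \<noteq> 0\<close> show ?thesis by blast
qed

lemma coprime_of_sq_rep:
  fixes D q u v :: int
  assumes "D > 1" "prime q" "v \<noteq> 0" "u^2 + D * v^2 = q^2"
  shows "coprime u v"
proof (rule coprimeI_primes_int)
  fix r :: int
  assume r: "prime r" "r dvd u" "r dvd v"
  then have "r dvd q^2"
    unfolding assms(4)[symmetric] by (simp add: power2_eq_square)
  then have "r = q"
    using r(1) assms(2) by (metis prime_dvd_power primes_dvd_imp_eq)
  then obtain u' v' where "u = q * u'" "v = q * v'"
    using r(2,3) by (auto elim!: dvdE)
  then have "q^2 * (u'^2 + D * v'^2) = q^2 * 1"
    using assms(4) by (simp add: power_mult_distrib algebra_simps)
  then have "u'^2 + D * v'^2 = 1"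
    using assms(2) by (simp add: prime_gt_0_int less_imp_neq)
  moreover have "v'^2 > 0"
    using assms(3) \<open>v = q * v'\<close> by simp
  then have "D * v'^2 \<ge> D * 1"
    using assms(1) by (intro mult_left_mono) linarith+
  ultimately show False
    using assms(1) zero_le_power2[of u'] by linarith
qed

lemma prime_sq_rep_exists:
  fixes D q :: int
  assumes "D > 1" "prime q" "odd q" "\<not> q dvd D" "QuadRes q (-D)"
    and "class_group_elem_2 (-4 * D)"
  shows "\<exists>x y. x > 0 \<and> y > 0 \<and> coprime x y \<and> x^2 + D * y^2 = q^2"
proof -
  obtain b where "[b^2 = -D] (mod q)"
    using assms(5) unfolding QuadRes_def by blast
  then have "q dvd b^2 + D"
    by (simp add: cong_iff_dvd_diff)
  then obtain c where bc: "b^2 + D = q * c"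
    by (elim dvdE)
  have "\<not> q dvd b"
  proof
    assume "q dvd b"
    then have "q dvd b^2"
      by (simp add: power2_eq_square)
    then show False
      using assms(4) \<open>q dvd b^2 + D\<close> by (simp add: dvd_add_right_iff)
  qed
  then have "\<not> q dvd 2 * b"
    using assms(2,3) odd_prime_not_dvd_two by (simp add: prime_dvd_mult_iff)
  then have "coprime q (2 * b)"
    by (rule prime_imp_coprime[OF assms(2)])
  moreover have "(2 * b)^2 - 4 * q * c = -4 * D"
    unfolding mult.assoc[of 4 q c] bc[symmetric] by (simp add: power_mult_distrib)
  ultimately have "prim_pos_def_form (-4 * D) (q, 2 * b, c)"
    using assms(1,2) prime_gt_0_int
    by (simp add: prim_pos_def_form_def form_disc_def coprime_iff_gcd_eq_1)
  then have "form_equiv (q, 2 * b, c) (q, -(2 * b), c)"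
    using assms(6) unfolding class_group_elem_2_def by blast
  then obtain u v where "v \<noteq> 0" and rep: "u^2 + D * v^2 = q^2"
    using ambiguous_form_represents_sq[OF bc \<open>\<not> q dvd 2 * b\<close>] by blast
  then have "coprime u v"
    using assms(1,2) by (rule coprime_of_sq_rep[rotated 2])
  have "u \<noteq> 0"
  proof
    assume "u = 0"
    then have "is_unit v"
      using \<open>coprime u v\<close> by simp
    then have "v^2 = 1"
      by (metis zdvd1_eq power2_abs one_power2)
    then have "q^2 = D"
      using rep \<open>u = 0\<close> by simp
    then show False
      using assms(4) by (metis dvd_triv_left power2_eq_square)
  qed
  then show ?thesis
    using \<open>v \<noteq> 0\<close> \<open>coprime u v\<close> rep
    by (intro exI[of _ "\<bar>u\<bar>"] exI[of _ "\<bar>v\<bar>"]) simp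
qed

lemma zeta_eq:
  fixes D :: int and q :: nat
  assumes "D > 1" "prime q" "odd q" "Legendre (-D) (int q) = 1" "class_group_elem_2 (-4 * D)"
  shows "\<exists>x y. coprime x y \<and> x^2 + D * y^2 = (int q)^2 \<and> zeta D q = quad_int D x y / of_nat q"
proof -
  have q: "prime (int q)" "odd (int q)" "\<not> int q dvd D" "QuadRes (int q) (-D)"
    using assms(2,3) Legendre_eq_1D[OF assms(4)] by auto
  obtain x y where xy: "x > 0" "y > 0" "coprime x y" "x^2 + D * y^2 = (int q)^2"
    using prime_sq_rep_exists[OF assms(1) q assms(5)] by blast
  have "(THE (x', y'). x' > 0 \<and> y' > 0 \<and> coprime x' y' \<and> (int q)^2 = x'^2 + D * y'^2) = (x, y)"
  proof (rule the_equality)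
    fix xy' :: "int \<times> int"
    assume "case xy' of (x', y') \<Rightarrow> x' > 0 \<and> y' > 0 \<and> coprime x' y' \<and> (int q)^2 = x'^2 + D * y'^2"
    then show "xy' = (x, y)"
      using prime_sq_rep_unique[OF assms(1) q(1-3)] xy by (cases xy') auto
  qed (use xy in auto)
  then show ?thesis
    using xy by (auto simp: zeta_def quad_int_def)
qed

lemma quad_int_div_power_int:
  fixes D x y e :: int and q n :: nat
  assumes "D \<ge> 0" "q > 0" "x^2 + D * y^2 = (int q)^2" "e = 1 \<or> e = -1"
  shows "(quad_int D x y / of_nat q) powi (e * int n) = quad_int D x (e * y) ^ n / of_nat q ^ n"
proof -
  have "quad_int D x y * quad_int D x (-y) = quad_int D (x^2 + D * y^2) 0"
    using quad_int_mult[OF assms(1), of x y x "-y"] by (simp add: power2_eq_square mult.assoc)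
  also have "\<dots> = of_nat q * of_nat q"
    unfolding assms(3) by (simp add: quad_int_def power2_eq_square)
  finally have "quad_int D x y * quad_int D x (-y) = of_nat q * of_nat q" .
  then have inv: "inverse (quad_int D x y / of_nat q) = quad_int D x (-y) / of_nat q"
    using assms(2) by (intro inverse_unique) (simp add: field_simps)
  from assms(4) show ?thesis
  proof
    assume "e = -1"
    then have "(quad_int D x y / of_nat q) powi (e * int n) = inverse (quad_int D x y / of_nat q) ^ n"
      by (simp add: power_int_minus power_inverse del: inverse_divide)
    then show ?thesis
      unfolding inv using \<open>e = -1\<close> by (simp add: power_divide)
  qed (simp add: power_divide)
qed

lemma zeta_prod_eq_primitive:
  fixes D :: int and k :: nat and p \<alpha> :: "nat \<Rightarrow> nat" and e :: "nat \<Rightarrow> int"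
  assumes "D > 1" "class_group_elem_2 (-4 * D)" "inj_on p {..<k}"
    and "\<forall>i<k. prime (p i) \<and> odd (p i) \<and> Legendre (- D) (int (p i)) = 1"
    and "\<forall>i<k. e i = 1 \<or> e i = -1"
  shows "\<exists>u v. coprime u v \<and>
    (\<Prod>i<k. zeta D (p i) powi (e i * int (\<alpha> i))) = quad_int D u v / of_nat (\<Prod>i<k. p i ^ \<alpha> i)"
proof -
  have "\<forall>i<k. \<exists>x y. coprime x y \<and> x^2 + D * y^2 = (int (p i))^2
      \<and> zeta D (p i) = quad_int D x y / of_nat (p i)"
    using zeta_eq[OF assms(1) _ _ _ assms(2)] assms(4) by blast
  then obtain x y where xy: "\<forall>i<k. coprime (x i) (y i) \<and> x i^2 + D * y i^2 = (int (p i))^2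
      \<and> zeta D (p i) = quad_int D (x i) (y i) / of_nat (p i)"
    by metis
  define w where "w i = quad_int D (x i) (e i * y i) ^ \<alpha> i" for i
  have "primitive_of_norm D (\<Prod>i<k. int (p i) ^ (2 * \<alpha> i)) (\<Prod>i<k. w i)"
  proof (rule primitive_of_norm_prod)
    show "\<forall>i<k. primitive_of_norm D (int (p i) ^ (2 * \<alpha> i)) (w i)"
    proof (intro allI impI)
      fix i assume "i < k"
      then have "coprime (x i) (e i * y i)" "x i^2 + D * (e i * y i)^2 = (int (p i))^2"
        using xy assms(5) by (auto simp: power_mult_distrib)
      moreover have "prime (int (p i))" "odd (int (p i))" "\<not> int (p i) dvd D"
        using assms(4) Legendre_eq_1D[of "- D" "int (p i)"] \<open>i < k\<close> by auto
      ultimately show "primitive_of_norm D (int (p i) ^ (2 * \<alpha> i)) (w i)"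
        unfolding w_def using assms(1) by (intro primitive_of_norm_power) auto
    qed
    show "\<forall>i<k. \<forall>j<k. i \<noteq> j \<longrightarrow> coprime (int (p i) ^ (2 * \<alpha> i)) (int (p j) ^ (2 * \<alpha> j))"
      using assms(3,4) by (metis coprime_power_left_iff coprime_power_right_iff coprime_int_iff
          inj_on_contraD lessThan_iff primes_coprime)
  qed (use assms(1) in simp)
  then obtain u v where "coprime u v" "(\<Prod>i<k. w i) = quad_int D u v"
    unfolding primitive_of_norm_def by blast
  have "(\<Prod>i<k. zeta D (p i) powi (e i * int (\<alpha> i))) = (\<Prod>i<k. w i / of_nat (p i ^ \<alpha> i))"
    using xy assms(1,4,5) unfolding w_def
    by (intro prod.cong refl) (simp add: quad_int_div_power_int prime_gt_0_nat)
  also have "\<dots> = quad_int D u v / of_nat (\<Prod>i<k. p i ^ \<alpha> i)"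
    by (simp add: prod_dividef \<open>(\<Prod>i<k. w i) = quad_int D u v\<close> del: of_nat_power)
  finally show ?thesis
    using \<open>coprime u v\<close> by blast
qed

lemma eq_of_coprime_proportional:
  fixes u v a b c C :: int
  assumes "C > 0" "c \<ge> 0" "coprime u v" "c * u = C * a" "c * v = C * b"
    and "gcd (gcd a b) c = 1"
  shows "c = C"
proof -
  have "C dvd gcd (c * u) (c * v)"
    using assms(4,5) by simp
  also have "gcd (c * u) (c * v) = c"
    using assms(2,3) by (simp flip: gcd_mult_distrib_int)
  finally obtain m where m: "c = C * m"
    by (elim dvdE)
  then have "a = m * u" "b = m * v"
    using assms(1,4,5) by (simp_all add: algebra_simps)
  then have "m dvd gcd (gcd a b) c"
    using m by simp
  then have "m = 1 \<or> m = -1"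
    using assms(6) by (simp add: zdvd1_eq abs_if split: if_splits)
  then show ?thesis
    using m assms(1,2,6) \<open>a = m * u\<close> \<open>b = m * v\<close> by (auto simp: zero_le_mult_iff)
qed

lemma sign_eq_of_int:
  fixes w :: "'a :: ring_1"
  assumes "w = 1 \<or> w = -1"
  shows "\<exists>s :: int. w = of_int s \<and> \<bar>s\<bar> = 1"
  using assms by (elim disjE) (auto intro: exI[of _ 1] exI[of _ "-1"])

lemma normalized_triple_denominator:
  fixes D u v C :: int and a b c :: nat and \<epsilon> \<sigma> \<tau> :: complex
  assumes "D > 0" "coprime u v" "C > 0"
    and "int a^2 + D * int b^2 = int c^2" "gcd (gcd a b) c = 1"
    and "\<epsilon> = 1 \<or> \<epsilon> = -1" "\<sigma> = 1 \<or> \<sigma> = -1" "\<tau> = 1 \<or> \<tau> = -1"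
    and "\<epsilon> * (quad_int D u v / of_int C) = (\<sigma> * of_nat a + \<tau> * of_nat b * sqrtmD D) / of_nat c"
  shows "int c = C"
proof -
  obtain s s' s'' where s: "\<epsilon> = of_int s" "\<bar>s\<bar> = 1" and s': "\<sigma> = of_int s'" "\<bar>s'\<bar> = 1"
    and s'': "\<tau> = of_int s''" "\<bar>s''\<bar> = 1"
    using sign_eq_of_int assms(6-8) by metis
  have "c \<noteq> 0"
  proof
    assume "c = 0"
    then have "int a^2 + D * int b^2 = 0"
      using assms(4) by simp
    moreover have "D * int b^2 \<ge> 0"
      using assms(1) by simp
    ultimately have "a = 0 \<and> b = 0"
      using assms(1) zero_le_power2[of "int a"] by (simp add: add_nonneg_eq_0_iff)
    then show False
      using assms(5) \<open>c = 0\<close> by simp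
  qed
  have "quad_int D (s * u) (s * v) / of_int C = quad_int D (s' * a) (s'' * b) / of_int c"
    using assms(9) unfolding s s' s'' of_int_mult_quad_int[symmetric] by (simp add: quad_int_def)
  then have "quad_int D (s * u) (s * v) * of_int c = quad_int D (s' * a) (s'' * b) * of_int C"
    using assms(3) \<open>c \<noteq> 0\<close> by (simp add: frac_eq_eq)
  then have "quad_int D (c * (s * u)) (c * (s * v)) = quad_int D (C * (s' * a)) (C * (s'' * b))"
    by (metis mult.commute of_int_mult_quad_int of_int_of_nat_eq)
  then have "c * (s * u) = C * (s' * a)" "c * (s * v) = C * (s'' * b)"
    using assms(1) quad_int_eq_iff by auto
  then have "\<bar>int c * (s * u)\<bar> = \<bar>C * (s' * a)\<bar>" "\<bar>int c * (s * v)\<bar> = \<bar>C * (s'' * b)\<bar>"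
    by simp_all
  then have "int c * \<bar>u\<bar> = C * int a" "int c * \<bar>v\<bar> = C * int b"
    using s(2) s'(2) s''(2) assms(3) by (simp_all add: abs_mult)
  moreover have "gcd (gcd (int a) (int b)) (int c) = 1"
    using assms(5) by (metis gcd_int_int_eq of_nat_1)
  ultimately show ?thesis
    using eq_of_coprime_proportional[of C "int c" "\<bar>u\<bar>" "\<bar>v\<bar>"] assms(2,3) by simp
qed

theorem theorem3p8:
  fixes D :: int and k :: nat and p \<alpha> :: "nat \<Rightarrow> nat" and e :: "nat \<Rightarrow> int"
    and \<epsilon> \<sigma> \<tau> :: complex and z :: complex and a b c :: nat
  assumes D_gt: "D > 1"
    and D_sqf: "squarefree D"
    and D_mod: "(- D) mod 4 = 2 \<or> (- D) mod 4 = 3"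
    and cls: "class_group_elem_2 (- 4 * D)"
    and z_in: "z \<in> G_D D"
    and p_inj: "inj_on p {..<k}"
    and p_prime: "\<forall>i<k. prime (p i) \<and> odd (p i) \<and> Legendre (- D) (int (p i)) = 1"
    and \<alpha>_pos: "\<forall>i<k. \<alpha> i \<ge> 1"
    and e_sign: "\<forall>i<k. e i = 1 \<or> e i = -1"
    and \<epsilon>_sign: "\<epsilon> = 1 \<or> \<epsilon> = -1"
    and z_prod: "z = \<epsilon> * (\<Prod>i<k. zeta D (p i) powi (e i * int (\<alpha> i)))"
    and abc: "int a ^ 2 + D * int b ^ 2 = int c ^ 2"
    and normalized: "gcd (gcd a b) c = 1"
    and \<sigma>_sign: "\<sigma> = 1 \<or> \<sigma> = -1"
    and \<tau>_sign: "\<tau> = 1 \<or> \<tau> = -1"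
    and z_abc: "z = (\<sigma> * of_nat a + \<tau> * of_nat b * sqrtmD D) / of_nat c"
  shows "c = (\<Prod>i<k. p i ^ \<alpha> i)"
proof -
  define N where "N = (\<Prod>i<k. p i ^ \<alpha> i)"
  obtain u v where "coprime u v"
    and prod_eq: "(\<Prod>i<k. zeta D (p i) powi (e i * int (\<alpha> i))) = quad_int D u v / of_nat N"
    using zeta_prod_eq_primitive[OF D_gt cls p_inj p_prime e_sign] unfolding N_def by blast
  have "N > 0"
    unfolding N_def using p_prime by (simp add: prime_gt_0_nat)
  moreover have "\<epsilon> * (quad_int D u v / of_int (int N))
      = (\<sigma> * of_nat a + \<tau> * of_nat b * sqrtmD D) / of_nat c"
    using z_prod z_abc prod_eq by simp
  ultimately have "int c = int N"
    using D_gt by (intro normalized_triple_denominator[OF _ \<open>coprime u v\<close> _ abc normalized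
        \<epsilon>_sign \<sigma>_sign \<tau>_sign]) simp_all
  then show ?thesis
    unfolding N_def[symmetric] by simp
qed

end
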